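(* $P_h([0,1])=\{1,2,3,\ldots\}\cup\{+\infty\}$.
   Context: For a topological space $A$, $Homeo(A)$ denotes the group of all homeomorphisms $A\to A$ under composition. For a subgroup $G$ of $Homeo(A)$ (acting by $gx=g(x)$), a nonempty subset $Y\subseteq A$ is invariant if $g(y)\in Y$ for all $g\in G$, $y\in Y$. The height of $(G,A)$ is $h(G,A)=\sup\{n\geq 0:$ there exist distinct closed invariant subsets $Y_0\subset Y_1\subset\cdots\subset Y_n=A\}$ (possibly $+\infty$). Finally $P_h(A)=\{h(G,A): G \text{ is a subgroup of } Homeo(A)\}$. *)

theory Defs
  imports "HOL-Analysis.Analysis" "HOL-Algebra.Group" "HOL-Library.Extended_Nat"
begin

definition Homeo :: "'a::topological_space set \<Rightarrow> ('a \<Rightarrow> 'a) set" where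
  "Homeo A = extensional A \<inter> {f. \<exists>g. homeomorphism A A f g}"

definition HomeoGroup :: "'a::topological_space set \<Rightarrow> ('a \<Rightarrow> 'a) monoid" where
  "HomeoGroup A =
    \<lparr>carrier = Homeo A,
     mult = \<lambda>g \<in> Homeo A. \<lambda>f \<in> Homeo A. compose A g f,
     one = \<lambda>x \<in> A. x\<rparr>"

definition closed_invariant ::
  "('a \<Rightarrow> 'a) set \<Rightarrow> 'a::topological_space set \<Rightarrow> 'a set \<Rightarrow> bool" where
  "closed_invariant G A Y \<longleftrightarrow>
     Y \<noteq> {} \<and> closedin (top_of_set A) Y \<and> (\<forall>g\<in>G. \<forall>y\<in>Y. g y \<in> Y)"

definition height :: "('a \<Rightarrow> 'a) set \<Rightarrow> 'a::topological_space set \<Rightarrow> enat" where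
  "height G A = Sup {enat n | n. \<exists>Y :: nat \<Rightarrow> 'a set.
      (\<forall>i\<le>n. closed_invariant G A (Y i)) \<and> (\<forall>i<n. Y i \<subset> Y (Suc i)) \<and> Y n = A}"

definition P_h :: "'a::topological_space set \<Rightarrow> enat set" where
  "P_h A = {height G A | G. subgroup G (HomeoGroup A)}"

end

theory Submission
  imports Defs
begin

text \<open>Every homeomorphism of [0,1] fixes or swaps the endpoints, so {0,1} is a proper closed
  invariant set and every height is at least 1, while for the trivial group all the intervals
  [0,t] are invariant and the height is infinite. For n \<ge> 1 let G be the group of homeomorphisms
  acting on the grid {i/n} as the identity or as the reflection x \<mapsto> 1 - x. Points of an open
  grid cell can be moved to each other, so, up to the reflection, the n + 1 grid points and
  open cells in [0,1/2] represent all orbits. A closed invariant set is a union of orbits, so a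
  strictly increasing chain gains a representative at each step and h(G) \<le> n; conversely,
  adjoining the orbits one at a time from the boundary inwards, each cell only after its
  endpoints, gives a chain of length n.\<close>

lemma Homeo_iff: "f \<in> Homeo A \<longleftrightarrow> f \<in> extensional A \<and> (\<exists>g. homeomorphism A A f g)"
  by (simp add: Homeo_def)

lemma restrict_in_Homeo:
  assumes "homeomorphism A A f g" shows "restrict f A \<in> Homeo A"
proof -
  have "homeomorphism A A (restrict f A) g"
    by (rule homeomorphism_cong[OF assms]) auto
  then show ?thesis by (auto simp: Homeo_iff)
qed

lemma Homeo_mapsto: "f \<in> Homeo A \<Longrightarrow> x \<in> A \<Longrightarrow> f x \<in> A"
  by (auto simp: Homeo_iff homeomorphism_def)

lemma HomeoGroup_simps:
  "carrier (HomeoGroup A) = Homeo A"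
  "\<one>\<^bsub>HomeoGroup A\<^esub> = (\<lambda>x\<in>A. x)"
  "f \<in> Homeo A \<Longrightarrow> g \<in> Homeo A \<Longrightarrow> f \<otimes>\<^bsub>HomeoGroup A\<^esub> g = compose A f g"
  by (auto simp: HomeoGroup_def)

lemma compose_in_Homeo:
  assumes "f \<in> Homeo A" "g \<in> Homeo A" shows "compose A f g \<in> Homeo A"
proof -
  obtain f' g' where "homeomorphism A A f f'" "homeomorphism A A g g'"
    using assms by (auto simp: Homeo_iff)
  then have "homeomorphism A A (f \<circ> g) (g' \<circ> f')"
    by (rule homeomorphism_compose[rotated])
  then have "restrict (f \<circ> g) A \<in> Homeo A"
    by (rule restrict_in_Homeo)
  then show ?thesis by (simp add: compose_def comp_def)
qed

lemma id_in_Homeo: "(\<lambda>x\<in>A. x) \<in> Homeo A"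
  by (rule restrict_in_Homeo[OF homeomorphism_ident])

lemma group_HomeoGroup: "group (HomeoGroup A)"
proof (rule groupI)
  fix f g h assume "f \<in> carrier (HomeoGroup A)" "g \<in> carrier (HomeoGroup A)" "h \<in> carrier (HomeoGroup A)"
  moreover have "h \<in> A \<rightarrow> A"
    using calculation Homeo_mapsto by (auto simp: HomeoGroup_simps)
  ultimately show "f \<otimes>\<^bsub>HomeoGroup A\<^esub> g \<otimes>\<^bsub>HomeoGroup A\<^esub> h = f \<otimes>\<^bsub>HomeoGroup A\<^esub> (g \<otimes>\<^bsub>HomeoGroup A\<^esub> h)"
    by (simp add: HomeoGroup_simps compose_in_Homeo compose_assoc)
next
  fix f assume f: "f \<in> carrier (HomeoGroup A)"
  then have "\<one>\<^bsub>HomeoGroup A\<^esub> \<otimes>\<^bsub>HomeoGroup A\<^esub> f = compose A (\<lambda>x\<in>A. x) f"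
    by (simp add: HomeoGroup_simps id_in_Homeo)
  also have "\<dots> = f"
    using f Homeo_mapsto[of f A]
    by (auto simp: HomeoGroup_simps compose_def fun_eq_iff Homeo_iff extensional_def)
  finally show "\<one>\<^bsub>HomeoGroup A\<^esub> \<otimes>\<^bsub>HomeoGroup A\<^esub> f = f" .
  from f obtain f' where hom: "homeomorphism A A f f'"
    by (auto simp: HomeoGroup_simps Homeo_iff)
  have f'_Homeo: "restrict f' A \<in> Homeo A"
    using restrict_in_Homeo[OF homeomorphism_symD[OF hom]] .
  have "restrict f' A \<otimes>\<^bsub>HomeoGroup A\<^esub> f = \<one>\<^bsub>HomeoGroup A\<^esub>"
    using f f'_Homeo hom Homeo_mapsto[of f A]
    by (auto simp: HomeoGroup_simps compose_def homeomorphism_def)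
  then show "\<exists>f'\<in>carrier (HomeoGroup A). f' \<otimes>\<^bsub>HomeoGroup A\<^esub> f = \<one>\<^bsub>HomeoGroup A\<^esub>"
    using f'_Homeo by (auto simp: HomeoGroup_simps)
qed (auto simp: HomeoGroup_simps compose_in_Homeo id_in_Homeo)

lemma HomeoGroup_inv_apply:
  assumes "f \<in> Homeo A" "x \<in> A"
  shows "(inv\<^bsub>HomeoGroup A\<^esub> f) (f x) = x"
proof -
  interpret group "HomeoGroup A" by (rule group_HomeoGroup)
  have f: "f \<in> carrier (HomeoGroup A)" using assms(1) by (simp add: HomeoGroup_simps)
  have "compose A (inv\<^bsub>HomeoGroup A\<^esub> f) f = (\<lambda>x\<in>A. x)"
    using l_inv[OF f] inv_closed[OF f] f by (simp add: HomeoGroup_simps)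
  then have "compose A (inv\<^bsub>HomeoGroup A\<^esub> f) f x = x"
    using assms(2) by simp
  then show ?thesis
    using assms(2) by (simp add: compose_def)
qed

lemma homeomorphism_interval_cases:
  fixes f :: "real \<Rightarrow> real"
  assumes hom: "homeomorphism {a..b} {a..b} f g" and "a \<le> b"
  shows "(mono_on {a..b} f \<and> f a = a \<and> f b = b) \<or> (antimono_on {a..b} f \<and> f a = b \<and> f b = a)"
proof -
  have im: "f ` {a..b} = {a..b}" and "continuous_on {a..b} f"
    using hom by (simp_all add: homeomorphism_def)
  moreover have "inj_on f {a..b}"
    using hom by (metis homeomorphism_def inj_on_inverseI)
  ultimately have "strict_mono_on {a..b} f \<or> strict_antimono_on {a..b} f"
    using injective_eq_monotone_map[OF is_interval_cc] by blast
  moreover obtain y y' where y: "y \<in> {a..b}" "f y = a" and y': "y' \<in> {a..b}" "f y' = b"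
    using im \<open>a \<le> b\<close> by (metis atLeastAtMost_iff imageE order_refl)
  moreover have "f a \<in> {a..b}" "f b \<in> {a..b}"
    using im \<open>a \<le> b\<close> by auto
  ultimately show ?thesis
  proof (elim disjE)
    assume "strict_mono_on {a..b} f"
    then have mono: "mono_on {a..b} f" by (rule strict_mono_on_imp_mono_on)
    have "f a \<le> a" "b \<le> f b"
      using y y' \<open>a \<le> b\<close> mono_onD[OF mono, of a y] mono_onD[OF mono, of y' b] by auto
    with \<open>f a \<in> {a..b}\<close> \<open>f b \<in> {a..b}\<close> have "f a = a" "f b = b" by auto
    with mono show ?thesis by blast
  next
    assume "strict_antimono_on {a..b} f"
    then have anti: "antimono_on {a..b} f" using strict_antimono_iff_antimono by blast
    have "b \<le> f a" "f b \<le> a"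
      using y y' \<open>a \<le> b\<close> monotone_onD[OF anti, of a y'] monotone_onD[OF anti, of y b] by auto
    with \<open>f a \<in> {a..b}\<close> \<open>f b \<in> {a..b}\<close> have "f a = b" "f b = a" by auto
    with anti show ?thesis by blast
  qed
qed

lemma homeomorphism_moving_point_interval:
  fixes a b u v :: real
  assumes "u \<in> {a<..<b}" "v \<in> {a<..<b}" "{a<..<b} \<subseteq> T"
  obtains f g where "homeomorphism T T f g" "f u = v" "\<And>x. x \<notin> {a<..<b} \<Longrightarrow> f x = x"
proof -
  have hull: "affine hull {a<..<b} = UNIV"
    using assms(1) by (intro affine_hull_open) auto
  obtain f g where "homeomorphism T T f g" "f u = v" "{x. \<not> (f x = x \<and> g x = x)} \<subseteq> {a<..<b}"
    by (rule homeomorphism_moving_point[of "{a<..<b}" T u v]) (use assms hull in auto)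
  then show thesis using that by blast
qed

lemma closed_invariant_subset: "closed_invariant G A Y \<Longrightarrow> Y \<subseteq> A"
  unfolding closed_invariant_def using closedin_imp_subset by fastforce

lemma closed_invariant_whole:
  assumes "subgroup G (HomeoGroup A)" "A \<noteq> {}"
  shows "closed_invariant G A A"
  using assms Homeo_mapsto subgroup.subset[OF assms(1)]
  by (auto simp: closed_invariant_def HomeoGroup_simps)

lemma height_ge_chain:
  assumes "\<forall>i\<le>n. closed_invariant G A (Y i)" "\<forall>i<n. Y i \<subset> Y (Suc i)" "Y n = A"
  shows "enat n \<le> height G A"
  unfolding height_def by (rule Sup_upper) (use assms in blast)

lemma closed_invariant_apply_iff:
  assumes G: "subgroup G (HomeoGroup A)" and Y: "closed_invariant G A Y" and "g \<in> G" "z \<in> A"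
  shows "g z \<in> Y \<longleftrightarrow> z \<in> Y"
proof -
  have "g \<in> Homeo A" using subgroup.subset[OF G] \<open>g \<in> G\<close> by (auto simp: HomeoGroup_simps)
  then have "(inv\<^bsub>HomeoGroup A\<^esub> g) (g z) = z"
    using \<open>z \<in> A\<close> by (rule HomeoGroup_inv_apply)
  moreover have "inv\<^bsub>HomeoGroup A\<^esub> g \<in> G"
    using G \<open>g \<in> G\<close> by (rule subgroup.m_inv_closed)
  ultimately show ?thesis
    using Y \<open>g \<in> G\<close> unfolding closed_invariant_def by metis
qed

lemma height_le_card_orbit_reps:
  assumes G: "subgroup G (HomeoGroup A)" and "finite D"
    and reps: "\<And>z. z \<in> A \<Longrightarrow> \<exists>g\<in>G. g z \<in> D"
  shows "height G A \<le> enat (card D - 1)"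
  unfolding height_def
proof (rule Sup_least)
  fix e assume "e \<in> {enat n | n. \<exists>Y :: nat \<Rightarrow> 'a set.
      (\<forall>i\<le>n. closed_invariant G A (Y i)) \<and> (\<forall>i<n. Y i \<subset> Y (Suc i)) \<and> Y n = A}"
  then obtain n Y where e: "e = enat n" and ci: "\<forall>i\<le>n. closed_invariant G A (Y i)"
    and chain: "\<forall>i<n. Y i \<subset> Y (Suc i)" by blast
  have rep: "\<exists>d\<in>D. \<forall>i\<le>n. d \<in> Y i \<longleftrightarrow> z \<in> Y i" if "z \<in> A" for z
  proof -
    obtain g where "g \<in> G" "g z \<in> D"
      using reps \<open>z \<in> A\<close> by blast
    then show ?thesis
      using closed_invariant_apply_iff[OF G _ \<open>g \<in> G\<close> \<open>z \<in> A\<close>] ci by blast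
  qed
  have Y_subset: "Y i \<subseteq> A" if "i \<le> n" for i
    using closed_invariant_subset ci that by blast
  have "Suc i \<le> card (D \<inter> Y i)" if "i \<le> n" for i
    using that
  proof (induction i)
    case 0
    have "Y 0 \<noteq> {}" using ci by (simp add: closed_invariant_def)
    then obtain z where "z \<in> Y 0" by blast
    then have "D \<inter> Y 0 \<noteq> {}"
      using rep[of z] Y_subset[of 0] by blast
    then show ?case using \<open>finite D\<close> by (auto simp: Suc_le_eq card_gt_0_iff)
  next
    case (Suc i)
    have step: "Y i \<subset> Y (Suc i)" using chain Suc.prems by simp
    then obtain z where "z \<in> Y (Suc i)" "z \<notin> Y i" by blast
    moreover have "z \<in> A" using Y_subset[OF Suc.prems] calculation by blast
    ultimately obtain d where "d \<in> D" "d \<in> Y (Suc i)" "d \<notin> Y i"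
      using rep[of z] Suc.prems by fastforce
    with step have "D \<inter> Y i \<subset> D \<inter> Y (Suc i)" by blast
    then have "card (D \<inter> Y i) < card (D \<inter> Y (Suc i))"
      using \<open>finite D\<close> by (intro psubset_card_mono) auto
    then show ?case using Suc by simp
  qed
  then have "Suc n \<le> card D"
    using card_mono[OF \<open>finite D\<close>, of "D \<inter> Y n"] by force
  then show "e \<le> enat (card D - 1)" using e by simp
qed

lemma height_interval_ge_one:
  fixes a b :: real
  assumes "a < b" and G: "subgroup G (HomeoGroup {a..b})"
  shows "1 \<le> height G {a..b}"
proof -
  have Homeo: "g \<in> Homeo {a..b}" if "g \<in> G" for g
    using subgroup.subset[OF G] that by (auto simp: HomeoGroup_simps)
  have "g y \<in> {a, b}" if "g \<in> G" "y \<in> {a, b}" for g y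
  proof -
    obtain g' where "homeomorphism {a..b} {a..b} g g'"
      using Homeo[OF \<open>g \<in> G\<close>] by (auto simp: Homeo_iff)
    then have "g a = a \<and> g b = b \<or> g a = b \<and> g b = a"
      using homeomorphism_interval_cases less_imp_le[OF \<open>a < b\<close>] by blast
    then show ?thesis using \<open>y \<in> {a, b}\<close> by auto
  qed
  then have "closed_invariant G {a..b} {a, b}"
    using \<open>a < b\<close> by (auto simp: closed_invariant_def intro: closed_subset)
  moreover have "closed_invariant G {a..b} {a..b}"
    using closed_invariant_whole[OF G] \<open>a < b\<close> by simp
  moreover have "{a, b} \<subset> {a..b}"
  proof -
    have "(a + b) / 2 \<in> {a..b} - {a, b}" using \<open>a < b\<close> by auto
    moreover have "{a, b} \<subseteq> {a..b}" using \<open>a < b\<close> by auto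
    ultimately show ?thesis by blast
  qed
  ultimately show ?thesis
    using height_ge_chain[of 1 G "{a..b}" "\<lambda>i. if i = 0 then {a, b} else {a..b}"]
    by (simp add: one_enat_def le_Suc_eq)
qed

lemma height_interval_trivial_group:
  fixes a b :: real
  assumes "a < b"
  shows "height {\<lambda>x\<in>{a..b}. x} {a..b} = \<infinity>"
proof -
  have "enat n \<le> height {\<lambda>x\<in>{a..b}. x} {a..b}" for n
  proof (rule height_ge_chain)
    define t where "t i = a + (b - a) * real (Suc i) / real (Suc n)" for i
    have "a \<le> t i" for i using \<open>a < b\<close> by (simp add: t_def)
    have "{a..t i} \<subseteq> {a..b}" if "i \<le> n" for i
    proof -
      have "(b - a) * real (Suc i) \<le> (b - a) * real (Suc n)"
        using that \<open>a < b\<close> by (intro mult_left_mono) auto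
      then have "(b - a) * real (Suc i) / real (Suc n) \<le> (b - a) * real (Suc n) / real (Suc n)"
        by (rule divide_right_mono) simp
      then show "{a..t i} \<subseteq> {a..b}" by (simp add: t_def)
    qed
    then show "\<forall>i\<le>n. closed_invariant {\<lambda>x\<in>{a..b}. x} {a..b} {a..t i}"
      using \<open>\<And>i. a \<le> t i\<close> by (fastforce simp: closed_invariant_def intro: closed_subset)
    have "t i < t (Suc i)" for i
      using \<open>a < b\<close> by (simp add: t_def divide_strict_right_mono)
    then show "\<forall>i<n. {a..t i} \<subset> {a..t (Suc i)}"
      using \<open>\<And>i. a \<le> t i\<close> by (simp add: atLeastatMost_psubset_iff less_imp_le)
    show "{a..t n} = {a..b}" by (simp add: t_def)
  qed
  then show ?thesis
    by (metis Suc_n_not_le_n enat_ord_simps(1) not_enat_eq)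
qed

definition grid :: "nat \<Rightarrow> real set" where
  "grid N = {real i / real N | i. i \<le> N}"

definition grid_group :: "nat \<Rightarrow> (real \<Rightarrow> real) set" where
  "grid_group N = {g \<in> Homeo {0..1}. (\<forall>x\<in>grid N. g x = x) \<or> (\<forall>x\<in>grid N. g x = 1 - x)}"

lemma grid_subset: "grid N \<subseteq> {0..1}"
  by (auto simp: grid_def divide_le_eq_1)

lemma zero_in_grid: "0 \<in> grid N"
  unfolding grid_def by force

lemma one_minus_in_grid:
  assumes "0 < N" "x \<in> grid N" shows "1 - x \<in> grid N"
proof -
  obtain i where "i \<le> N" "x = real i / real N"
    using assms(2) by (auto simp: grid_def)
  then have "1 - x = real (N - i) / real N"
    using assms(1) by (simp add: of_nat_diff field_simps)
  then show ?thesis unfolding grid_def by auto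
qed

lemma grid_group_Homeo: "g \<in> grid_group N \<Longrightarrow> g \<in> Homeo {0..1}"
  by (simp add: grid_group_def)

lemma id_in_grid_group: "(\<lambda>x\<in>{0..1}. x) \<in> grid_group N"
proof -
  have "\<forall>x\<in>grid N. (\<lambda>x\<in>{0..1}. x) x = x"
    using grid_subset[of N] by auto
  then show ?thesis
    using id_in_Homeo by (simp add: grid_group_def)
qed

lemma subgroup_grid_group:
  assumes "0 < N" shows "subgroup (grid_group N) (HomeoGroup {0..1})"
proof (rule group.subgroupI[OF group_HomeoGroup])
  show "grid_group N \<subseteq> carrier (HomeoGroup {0..1})"
    by (auto simp: grid_group_def HomeoGroup_simps)
  show "grid_group N \<noteq> {}"
    using id_in_grid_group by blast
next
  fix g assume g: "g \<in> grid_group N"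
  let ?h = "inv\<^bsub>HomeoGroup {0..1}\<^esub> g"
  have "?h \<in> Homeo {0..1}"
    using group.inv_closed[OF group_HomeoGroup] grid_group_Homeo[OF g] by (simp add: HomeoGroup_simps)
  moreover have inv_cancel: "?h (g x) = x" if "x \<in> grid N" for x
    using HomeoGroup_inv_apply grid_group_Homeo[OF g] grid_subset[of N] that by blast
  moreover have "(\<forall>x\<in>grid N. ?h x = x) \<or> (\<forall>x\<in>grid N. ?h x = 1 - x)"
  proof (cases "\<forall>x\<in>grid N. g x = x")
    case True
    then show ?thesis using inv_cancel by metis
  next
    case False
    then have "g (1 - x) = x" if "x \<in> grid N" for x
      using g one_minus_in_grid[OF assms that] by (auto simp: grid_group_def)
    then show ?thesis using inv_cancel one_minus_in_grid[OF assms] by metis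
  qed
  ultimately show "?h \<in> grid_group N" by (simp add: grid_group_def)
next
  fix g h assume g: "g \<in> grid_group N" and h: "h \<in> grid_group N"
  have "(\<forall>x\<in>grid N. g (h x) = x) \<or> (\<forall>x\<in>grid N. g (h x) = 1 - x)"
    using g h one_minus_in_grid[OF assms] unfolding grid_group_def by auto
  moreover have "compose {0..1} g h x = g (h x)" if "x \<in> grid N" for x
    using that grid_subset[of N] by (auto simp: compose_def)
  moreover have "compose {0..1} g h \<in> Homeo {0..1}"
    using g h by (simp add: grid_group_Homeo compose_in_Homeo)
  ultimately show "g \<otimes>\<^bsub>HomeoGroup {0..1}\<^esub> h \<in> grid_group N"
    using g h by (simp add: grid_group_def HomeoGroup_simps)
qed

lemma reflection_in_grid_group: "(\<lambda>x\<in>{0..1::real}. 1 - x) \<in> grid_group N"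
proof -
  have "homeomorphism {0..1::real} {0..1} (\<lambda>x. 1 - x) (\<lambda>x. 1 - x)"
    unfolding homeomorphism_def by (auto intro!: continuous_intros simp: image_iff)
  then have "(\<lambda>x\<in>{0..1::real}. 1 - x) \<in> Homeo {0..1}"
    by (rule restrict_in_Homeo)
  moreover have "\<forall>x\<in>grid N. (\<lambda>x\<in>{0..1::real}. 1 - x) x = 1 - x"
    using grid_subset[of N] by auto
  ultimately show ?thesis by (simp add: grid_group_def)
qed

lemma grid_group_moving_point:
  assumes "k < N" and uv: "u \<in> {real k / N<..<real (Suc k) / N}" "v \<in> {real k / N<..<real (Suc k) / N}"
  shows "\<exists>g\<in>grid_group N. g u = v"
proof -
  have cell: "{real k / N<..<real (Suc k) / N} \<subseteq> {0..1}"
  proof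
    fix x assume "x \<in> {real k / N<..<real (Suc k) / N}"
    moreover have "0 \<le> real k / N" by simp
    moreover have "real (Suc k) / N \<le> 1"
      using \<open>k < N\<close> by (simp add: divide_le_eq_1)
    ultimately show "x \<in> {0..1}"
      by (simp only: greaterThanLessThan_iff atLeastAtMost_iff) linarith
  qed
  obtain f f' where hom: "homeomorphism {0..1} {0..1} f f'" and "f u = v"
    and fixed: "\<And>x. x \<notin> {real k / N<..<real (Suc k) / N} \<Longrightarrow> f x = x"
    using homeomorphism_moving_point_interval[OF uv cell] by blast
  have "x \<notin> {real k / N<..<real (Suc k) / N}" if "x \<in> grid N" for x
  proof -
    obtain i where "i \<le> N" "x = real i / real N"
      using \<open>x \<in> grid N\<close> by (auto simp: grid_def)
    show ?thesis
    proof (cases "i \<le> k")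
      case True
      then have "x \<le> real k / N" using \<open>x = real i / N\<close> by (simp add: divide_right_mono)
      then show ?thesis by simp
    next
      case False
      then have "real (Suc k) / N \<le> x" using \<open>x = real i / N\<close> by (simp add: divide_right_mono)
      then show ?thesis by simp
    qed
  qed
  then have "\<forall>x\<in>grid N. restrict f {0..1} x = x"
    using fixed grid_subset[of N] by auto
  moreover have "restrict f {0..1} u = v"
    using \<open>f u = v\<close> uv(1) cell by auto
  ultimately show ?thesis
    using restrict_in_Homeo[OF hom] by (auto simp: grid_group_def)
qed

text \<open>The grid points k/n and the cell midpoints (2k+1)/(2n) in [0,1/2].\<close>

definition orbit_reps :: "nat \<Rightarrow> real set" where
  "orbit_reps N = (\<lambda>j. real j / (2 * real N)) ` {..N}"

lemma card_orbit_reps: "0 < N \<Longrightarrow> card (orbit_reps N) = Suc N"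
  unfolding orbit_reps_def by (subst card_image) (auto simp: inj_on_def)

lemma grid_group_orbit_reps_lower_half:
  assumes "0 < N" "0 \<le> z" "z \<le> 1/2"
  shows "\<exists>g\<in>grid_group N. g z \<in> orbit_reps N"
proof -
  define k where "k = nat \<lfloor>z * N\<rfloor>"
  have "of_int \<lfloor>z * N\<rfloor> = real k"
    using assms(2) by (simp add: k_def)
  then have k: "real k \<le> z * N" "z * N < real k + 1"
    by linarith+
  have "z * N \<le> N / 2"
    using assms by (simp add: mult_right_mono)
  show ?thesis
  proof (cases "real k = z * N")
    case True
    then have "z = real (2 * k) / (2 * real N)"
      using assms(1) by (simp add: field_simps)
    moreover have "2 * k \<le> N"
      using True \<open>z * N \<le> N / 2\<close> by linarith
    ultimately have "z \<in> orbit_reps N"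
      unfolding orbit_reps_def by blast
    then have "(\<lambda>x\<in>{0..1}. x) z \<in> orbit_reps N"
      using assms by simp
    then show ?thesis using id_in_grid_group by blast
  next
    case False
    let ?m = "real (2 * k + 1) / (2 * real N)"
    have "2 * k + 1 \<le> N"
      using False k \<open>z * N \<le> N / 2\<close> by linarith
    moreover have "z \<in> {real k / N<..<real (Suc k) / N}" "?m \<in> {real k / N<..<real (Suc k) / N}"
      using False k assms(1) by (auto simp: field_simps)
    ultimately obtain g where "g \<in> grid_group N" "g z = ?m"
      using grid_group_moving_point[of k N z ?m] by auto
    moreover have "?m \<in> orbit_reps N"
      using \<open>2 * k + 1 \<le> N\<close> unfolding orbit_reps_def by blast
    ultimately show ?thesis by metis
  qed
qed

lemma grid_group_orbit_reps:
  assumes "0 < N" "z \<in> {0..1}"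
  shows "\<exists>g\<in>grid_group N. g z \<in> orbit_reps N"
proof (cases "z \<le> 1/2")
  case True
  then show ?thesis using grid_group_orbit_reps_lower_half assms by auto
next
  case False
  let ?r = "\<lambda>x\<in>{0..1::real}. 1 - x"
  obtain g where g: "g \<in> grid_group N" "g (1 - z) \<in> orbit_reps N"
    using grid_group_orbit_reps_lower_half[OF assms(1), of "1 - z"] False assms(2) by auto
  have "g \<otimes>\<^bsub>HomeoGroup {0..1}\<^esub> ?r \<in> grid_group N"
    using subgroup.m_closed[OF subgroup_grid_group[OF assms(1)] g(1) reflection_in_grid_group] .
  moreover have "(g \<otimes>\<^bsub>HomeoGroup {0..1}\<^esub> ?r) z = g (1 - z)"
    using g(1) reflection_in_grid_group assms(2)
    by (simp add: grid_group_Homeo HomeoGroup_simps compose_def)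
  ultimately show ?thesis using g(2) by metis
qed

lemma height_grid_group_le:
  assumes "0 < N" shows "height (grid_group N) {0..1} \<le> enat N"
proof -
  have "finite (orbit_reps N)" by (simp add: orbit_reps_def)
  then show ?thesis
    using height_le_card_orbit_reps[OF subgroup_grid_group[OF assms] _ grid_group_orbit_reps[OF assms]]
    by (simp add: card_orbit_reps[OF assms])
qed

lemma grid_group_cases:
  assumes "g \<in> grid_group N"
  shows "(mono_on {0..1} g \<and> (\<forall>x\<in>grid N. g x = x)) \<or>
    (antimono_on {0..1} g \<and> (\<forall>x\<in>grid N. g x = 1 - x))"
proof -
  obtain g' where "homeomorphism {0..1} {0..1} g g'"
    using grid_group_Homeo[OF assms] by (auto simp: Homeo_iff)
  then have "(mono_on {0..1} g \<and> g 0 = 0) \<or> (antimono_on {0..1} g \<and> g 0 = 1)"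
    using homeomorphism_interval_cases[of 0 1 g g'] by auto
  moreover have "(\<forall>x\<in>grid N. g x = x) \<or> (\<forall>x\<in>grid N. g x = 1 - x)"
    using assms by (simp add: grid_group_def)
  ultimately show ?thesis
    using zero_in_grid[of N] by force
qed

definition collar :: "real \<Rightarrow> real set \<Rightarrow> real set" where
  "collar c E = {x \<in> {0..1}. x \<le> c \<or> 1 - c \<le> x \<or> x \<in> E}"

lemma collar_closed_invariant:
  assumes "0 < N" "c \<in> grid N" "finite E" "E \<subseteq> grid N" "\<And>x. x \<in> E \<Longrightarrow> 1 - x \<in> E"
  shows "closed_invariant (grid_group N) {0..1} (collar c E)"
proof -
  have c: "c \<in> {0..1}" "1 - c \<in> {0..1}" "1 - c \<in> grid N"
    using assms(2) grid_subset[of N] one_minus_in_grid[OF assms(1,2)] by auto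
  have "g y \<in> collar c E" if g: "g \<in> grid_group N" and "y \<in> collar c E" for g y
  proof -
    have y: "y \<in> {0..1}" "y \<le> c \<or> 1 - c \<le> y \<or> y \<in> E"
      using \<open>y \<in> collar c E\<close> by (auto simp: collar_def)
    have "g y \<le> c \<or> 1 - c \<le> g y \<or> g y \<in> E"
      using grid_group_cases[OF g]
    proof (elim disjE conjE)
      assume "mono_on {0..1} g" "\<forall>x\<in>grid N. g x = x"
      then show ?thesis
        using y c assms(2,4) mono_onD[of "{0..1}" g y c] mono_onD[of "{0..1}" g "1 - c" y] by auto
    next
      assume "antimono_on {0..1} g" "\<forall>x\<in>grid N. g x = 1 - x"
      then show ?thesis
        using y c assms(2,4,5) monotone_onD[of "{0..1}" "(\<le>)" "(\<ge>)" g y c]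
          monotone_onD[of "{0..1}" "(\<le>)" "(\<ge>)" g "1 - c" y] by auto
    qed
    moreover have "g y \<in> {0..1}"
      using Homeo_mapsto[OF grid_group_Homeo[OF g] y(1)] .
    ultimately show ?thesis by (simp add: collar_def)
  qed
  moreover have "0 \<in> collar c E"
    using c by (simp add: collar_def)
  moreover have "collar c E = {0..1} \<inter> ({..c} \<union> {1 - c..} \<union> E)"
    by (auto simp: collar_def)
  then have "closedin (top_of_set {0..1}) (collar c E)"
    using \<open>finite E\<close> by (simp add: closedin_closed_Int closed_Un finite_imp_closed)
  ultimately show ?thesis
    unfolding closed_invariant_def by blast
qed

text \<open>For i < n with k = i div 2: the points within distance k/n of the boundary, together
  with the two grid points at distance (k+1)/n when i is odd.\<close>

definition grid_chain :: "nat \<Rightarrow> nat \<Rightarrow> real set" where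
  "grid_chain N i = (if i = N then {0..1} else
     collar (real (i div 2) / N)
       (if even i then {} else {real (Suc (i div 2)) / N, 1 - real (Suc (i div 2)) / N}))"

lemma grid_chain_closed_invariant:
  assumes "0 < N" "i \<le> N"
  shows "closed_invariant (grid_group N) {0..1} (grid_chain N i)"
proof (cases "i = N")
  case True
  then show ?thesis
    using closed_invariant_whole[OF subgroup_grid_group[OF assms(1)]] by (simp add: grid_chain_def)
next
  case False
  have "Suc (i div 2) \<le> N" using assms False by linarith
  then have "real (i div 2) / N \<in> grid N" "real (Suc (i div 2)) / N \<in> grid N"
    unfolding grid_def by force+
  then show ?thesis
    using False one_minus_in_grid[OF assms(1)]
    by (auto simp: grid_chain_def intro!: collar_closed_invariant[OF assms(1)])
qed

lemma grid_cell_bounds: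
  fixes k N :: nat
  assumes "0 < N" "2 * k + 1 \<le> N"
  shows "real k / N < real (2 * k + 1) / (2 * N)"
    and "real (2 * k + 1) / (2 * N) < real (Suc k) / N"
    and "real (2 * k + 1) / (2 * N) < 1 - real k / N"
    and "real (2 * k + 1) / (2 * N) \<noteq> 1 - real (Suc k) / N"
    and "2 * k + 1 < N \<Longrightarrow> real (Suc k) / N < 1 - real k / N"
proof -
  have halves: "real k / N = real (2 * k) / (2 * N)" "real (Suc k) / N = real (2 * k + 2) / (2 * N)"
    "1 - real k / N = real (2 * N - 2 * k) / (2 * N)"
    "1 - real (Suc k) / N = real (2 * N - (2 * k + 2)) / (2 * N)"
    using assms by (simp_all add: of_nat_diff field_simps)
  show "real k / N < real (2 * k + 1) / (2 * N)" "real (2 * k + 1) / (2 * N) < real (Suc k) / N"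
    unfolding halves(1,2) using assms(1) by (intro divide_strict_right_mono; simp)+
  have "real (2 * k + 1) / (2 * N) < real (2 * N - 2 * k) / (2 * N)"
    using assms by (intro divide_strict_right_mono) simp_all
  then show "real (2 * k + 1) / (2 * N) < 1 - real k / N"
    by (simp only: halves(3))
  show "real (2 * k + 1) / (2 * N) \<noteq> 1 - real (Suc k) / N"
  proof
    assume "real (2 * k + 1) / (2 * N) = 1 - real (Suc k) / N"
    then have "real (2 * k + 1) / (2 * N) = real (2 * N - (2 * k + 2)) / (2 * N)"
      by (simp only: halves(4))
    then have "2 * k + 1 = 2 * N - (2 * k + 2)"
      using assms(1) by (simp only: divide_cancel_right of_nat_eq_iff) simp
    then show False by presburger
  qed
  assume "2 * k + 1 < N"
  then have "real (2 * k + 2) / (2 * N) < real (2 * N - 2 * k) / (2 * N)"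
    using assms(1) by (intro divide_strict_right_mono) simp_all
  then show "real (Suc k) / N < 1 - real k / N"
    by (simp only: halves(2,3))
qed

lemma grid_chain_psubset_Suc:
  assumes "0 < N" "i < N"
  shows "grid_chain N i \<subset> grid_chain N (Suc i)"
proof -
  define k where "k = i div 2"
  define c c' where "c = real k / N" and "c' = real (Suc k) / N"
  define m where "m = real (2 * k + 1) / (2 * N)"
  have Y: "grid_chain N i = collar c (if even i then {} else {c', 1 - c'})"
    using assms by (simp add: grid_chain_def k_def c_def c'_def)
  have "2 * k + 1 \<le> N"
    using assms(2) unfolding k_def by linarith
  have cm: "c < m" and mc': "m < c'" and mc: "m < 1 - c" and mc'': "m \<noteq> 1 - c'"
    using grid_cell_bounds(1-4)[OF assms(1) \<open>2 * k + 1 \<le> N\<close>] by (simp_all add: c_def c'_def m_def)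
  have "0 \<le> c" by (simp add: c_def)
  with cm mc' mc mc''
  have m_new: "m \<notin> grid_chain N i"
    by (auto simp: Y collar_def)
  have m_unit: "m \<in> {0..1}"
    using \<open>0 \<le> c\<close> cm mc by auto
  have "grid_chain N i \<subseteq> {0..1}"
    by (auto simp: Y collar_def)
  consider "Suc i = N" | "Suc i < N" "odd i" | "Suc i < N" "even i"
    using assms(2) Suc_lessI by blast
  then show ?thesis
  proof cases
    case 1
    then have "grid_chain N (Suc i) = {0..1}"
      by (simp add: grid_chain_def)
    then show ?thesis
      using m_new m_unit \<open>grid_chain N i \<subseteq> {0..1}\<close> by blast
  next
    case 2
    then have Y': "grid_chain N (Suc i) = collar c' {}"
      by (simp add: grid_chain_def k_def c'_def)
    have "c \<le> c'" using cm mc' by linarith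
    then have "grid_chain N i \<subseteq> grid_chain N (Suc i)"
      using 2 \<open>grid_chain N i \<subseteq> {0..1}\<close> by (auto simp: Y Y' collar_def)
    moreover have "m \<in> grid_chain N (Suc i)"
      using m_unit mc' by (simp add: Y' collar_def)
    ultimately show ?thesis
      using m_new by blast
  next
    case 3
    then have Y': "grid_chain N (Suc i) = collar c {c', 1 - c'}"
      by (simp add: grid_chain_def k_def c_def c'_def)
    have "2 * k + 1 < N"
      using 3 unfolding k_def by presburger
    then have "c' < 1 - c"
      using grid_cell_bounds(5)[OF assms(1) \<open>2 * k + 1 \<le> N\<close>] by (simp add: c_def c'_def)
    moreover have "c < c'" using cm mc' by linarith
    ultimately have "c' \<notin> grid_chain N i"
      using 3 by (simp add: Y collar_def)
    moreover have "c' \<in> grid_chain N (Suc i)"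
      using \<open>c < c'\<close> \<open>c' < 1 - c\<close> \<open>0 \<le> c\<close> by (simp add: Y' collar_def)
    moreover have "grid_chain N i \<subseteq> grid_chain N (Suc i)"
      using 3 by (auto simp: Y Y' collar_def)
    ultimately show ?thesis by blast
  qed
qed

lemma height_grid_group_ge:
  assumes "0 < N" shows "enat N \<le> height (grid_group N) {0..1}"
proof (rule height_ge_chain[where Y = "grid_chain N"])
  show "\<forall>i\<le>N. closed_invariant (grid_group N) {0..1} (grid_chain N i)"
    using grid_chain_closed_invariant assms by blast
  show "\<forall>i<N. grid_chain N i \<subset> grid_chain N (Suc i)"
    using grid_chain_psubset_Suc assms by blast
  show "grid_chain N N = {0..1}"
    by (simp add: grid_chain_def)
qed

theorem theorem2p3:
  shows "P_h {0..1::real} = {enat n | n. n \<ge> 1} \<union> {\<infinity>}"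
proof
  show "P_h {0..1::real} \<subseteq> {enat n | n. n \<ge> 1} \<union> {\<infinity>}"
  proof
    fix h assume "h \<in> P_h {0..1::real}"
    then obtain G where "subgroup G (HomeoGroup {0..1::real})" "h = height G {0..1}"
      by (auto simp: P_h_def)
    then have "1 \<le> h"
      using height_interval_ge_one[of 0 1 G] by simp
    then show "h \<in> {enat n | n. n \<ge> 1} \<union> {\<infinity>}"
      by (cases h) (auto simp: one_enat_def)
  qed
next
  have "enat n \<in> P_h {0..1::real}" if "1 \<le> n" for n
  proof -
    have "height (grid_group n) {0..1} = enat n"
      using height_grid_group_le height_grid_group_ge that by (simp add: order_antisym)
    moreover have "subgroup (grid_group n) (HomeoGroup {0..1})"
      using subgroup_grid_group that by simp
    ultimately show ?thesis
      unfolding P_h_def by (intro CollectI exI[of _ "grid_group n"]) simp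
  qed
  moreover have "\<infinity> \<in> P_h {0..1::real}"
  proof -
    have "subgroup {\<lambda>x\<in>{0..1::real}. x} (HomeoGroup {0..1})"
      using group.triv_subgroup[OF group_HomeoGroup] by (simp add: HomeoGroup_simps)
    then show ?thesis
      using height_interval_trivial_group[of 0 1]
      unfolding P_h_def by (intro CollectI exI[of _ "{\<lambda>x\<in>{0..1::real}. x}"]) simp
  qed
  ultimately show "{enat n | n. n \<ge> 1} \<union> {\<infinity>} \<subseteq> P_h {0..1::real}"
    by blast
qed

end
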